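(* Let $\langle v,w\rangle=g(v,w)+\mathrm{i}\,\omega(v,w)$ for $v,w\in V$, and let $M\in\mathcal{G}$. Then for all $v,w\in V$: $$\langle C_Mv,w\rangle=\langle v,C_{M^{-1}}w\rangle,\qquad \langle D_Mv,w\rangle=\begin{cases}-\langle D_{M^{-1}}w,v\rangle&\text{(bosons)}\\ +\langle D_{M^{-1}}w,v\rangle&\text{(fermions)}\end{cases},$$ and, when $C_M$ is invertible so that $Z_M=C_M^{-1}D_M$ is defined, $$\langle Z_Mv,w\rangle=\begin{cases}+\langle Z_Mw,v\rangle&\text{(bosons)}\\ -\langle Z_Mw,v\rangle&\text{(fermions)}\end{cases}.$$
   Context: $V=\mathbb{R}^{2N}$. Bosons: symplectic form $\Omega^{ab}$ (standard $\begin{pmatrix}0&\mathbb{1}\\-\mathbb{1}&0\end{pmatrix}$), $\mathcal{G}=\mathrm{Sp}(2N,\mathbb{R})$, $J$ a complex structure ($J^2=-\mathbb{1}$) with $J\Omega J^\intercal=\Omega$ and $G:=-J\Omega$ positive definite. Fermions: metric $G=\mathbb{1}$, $\mathcal{G}=\mathrm{SO}(2N,\mathbb{R})$, $J$ orthogonal with $J^2=-\mathbb{1}$, and $\Omega:=JG$. In both cases $g=G^{-1}$ and $\omega=\Omega^{-1}$ are the corresponding bilinear forms on $V$, and $V$ is regarded as a complex vector space with $\mathrm{i}$ acting as $J$. $C_M=\frac12(M-JMJ)$, $D_M=\frac12(M+JMJ)$. *)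

theory Defs
  imports "HOL-Analysis.Analysis"
begin

text \<open>V = R^{2N} is modelled as real^('n + 'n), N = CARD('n); the first copy of 'n
 indexes the first N coordinates, the second copy the last N coordinates.
 Matrices act on column vectors by *v; bilinear forms are matrices B with
 B(v,w) = v \<bullet> (B *v w).\<close>

definition sympOmega :: "real^('n::finite + 'n)^('n + 'n)" where
  "sympOmega = (\<chi> i j. (case (i, j) of
       (Inl a, Inr b) \<Rightarrow> (if a = b then 1 else 0)
     | (Inr a, Inl b) \<Rightarrow> (if a = b then -1 else 0)
     | _ \<Rightarrow> 0))"

definition cform :: "real^'m^'m \<Rightarrow> real^'m^'m \<Rightarrow> real^'m \<Rightarrow> real^'m \<Rightarrow> complex" where
  "cform g \<omega> v w = complex_of_real (v \<bullet> (g *v w)) + \<i> * complex_of_real (v \<bullet> (\<omega> *v w))"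

definition CM :: "real^'m^'m \<Rightarrow> real^'m^'m \<Rightarrow> real^'m^'m" where
  "CM J M = (1/2) *\<^sub>R (M - J ** M ** J)"

definition DM :: "real^'m^'m \<Rightarrow> real^'m^'m \<Rightarrow> real^'m^'m" where
  "DM J M = (1/2) *\<^sub>R (M + J ** M ** J)"

definition ZM :: "real^'m^'m \<Rightarrow> real^'m^'m \<Rightarrow> real^'m^'m" where
  "ZM J M = matrix_inv (CM J M) ** DM J M"

text \<open>Bosonic data: G = -J Omega, g = G^{-1}, omega = Omega^{-1}.\<close>
definition bos_form :: "real^('n::finite + 'n)^('n + 'n) \<Rightarrow> real^('n + 'n) \<Rightarrow> real^('n + 'n) \<Rightarrow> complex" where
  "bos_form J = cform (matrix_inv (- (J ** sympOmega))) (matrix_inv sympOmega)"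

text \<open>Fermionic data: G = 1, Omega = J G, g = G^{-1}, omega = Omega^{-1}.\<close>
definition ferm_form :: "real^('n::finite + 'n)^('n + 'n) \<Rightarrow> real^('n + 'n) \<Rightarrow> real^('n + 'n) \<Rightarrow> complex" where
  "ferm_form J = cform (matrix_inv (mat 1)) (matrix_inv (J ** mat 1))"

end

theory Submission
  imports Defs
begin

text \<open>With Gram matrices g and \<omega>, the identity <A v, w> = <v, B w> says that B is the
  adjoint of A for both forms, and <A v, w> = c <B w, v> is the analogous twisted relation.
  In both settings one of the two forms, P (\<omega> for bosons, g for fermions), is invariant under
  M and J, i.e. M^T P = P M^-1 and J^T P = - P J, while the other one is a multiple of P J.
  Hence C_M and D_M have P-adjoints C_(M^-1) and D_(M^-1); since C_M commutes and D_M
  anticommutes with J, passing from P to P J keeps the first relation and costs D_M a sign.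
  The relation C_M D_(M^-1) = - D_M C_(M^-1) turns these into Z_M^T P = - P Z_M, and Z_M
  anticommutes with J. The bosonic and fermionic signs differ because P is antisymmetric
  in one case and symmetric in the other.\<close>

lemma matrix_mul_lneg: "(- A) ** (B :: 'a::ring_1^'p^'n) = - (A ** B)"
  by (simp add: matrix_matrix_mult_def vec_eq_iff sum_negf)

lemma matrix_mul_rneg: "(A :: 'a::ring_1^'n^'m) ** (- B) = - (A ** B)"
  by (simp add: matrix_matrix_mult_def vec_eq_iff sum_negf)

lemma matrix_add_rdistrib: "(A + B) ** (C :: 'a::semiring_1^'p^'n) = A ** C + B ** C"
  by (simp add: matrix_matrix_mult_def vec_eq_iff sum.distrib algebra_simps)

lemma matrix_diff_ldistrib: "(A :: 'a::ring_1^'n^'m) ** (B - C) = A ** B - A ** C"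
  by (simp add: matrix_matrix_mult_def vec_eq_iff sum_subtractf algebra_simps)

lemma matrix_diff_rdistrib: "(A - B) ** (C :: 'a::ring_1^'p^'n) = A ** C - B ** C"
  by (simp add: matrix_matrix_mult_def vec_eq_iff sum_subtractf algebra_simps)

lemma transpose_add: "transpose (A + B) = transpose A + transpose (B :: 'a::semiring_1^'n^'m)"
  by (simp add: transpose_def vec_eq_iff)

lemma transpose_diff: "transpose (A - B) = transpose A - transpose (B :: 'a::ring_1^'n^'m)"
  by (simp add: transpose_def vec_eq_iff)

lemma transpose_uminus: "transpose (- A) = - transpose (A :: 'a::ring_1^'n^'m)"
  by (simp add: transpose_def vec_eq_iff)

lemma matrix_mul_scaleR_right: "(A :: 'a::real_algebra_1^'n^'m) ** (k *\<^sub>R B) = k *\<^sub>R (A ** B)"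
  by (simp add: matrix_scalar_ac scalar_matrix_assoc)

lemmas matrix_ring_simps = matrix_add_ldistrib matrix_add_rdistrib matrix_diff_ldistrib
  matrix_diff_rdistrib matrix_mul_lneg matrix_mul_rneg matrix_mul_assoc
  scalar_matrix_assoc[symmetric] matrix_mul_scaleR_right transpose_add transpose_diff transpose_uminus
  transpose_scalar matrix_transpose_mul

lemma matrix_inv_unique:
  fixes A B :: "'a::field^'n^'n"
  assumes "A ** B = mat 1"
  shows "matrix_inv A = B"
proof -
  have "A ** B = mat 1 \<and> B ** A = mat 1"
    using assms matrix_left_right_inverse by blast
  then have inv: "A ** matrix_inv A = mat 1 \<and> matrix_inv A ** A = mat 1"
    unfolding matrix_inv_def by (rule someI)
  have "matrix_inv A = matrix_inv A ** (A ** B)"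
    using assms by simp
  also have "\<dots> = B"
    using inv by (simp add: matrix_mul_assoc)
  finally show ?thesis .
qed

lemma matrix_inv_right:
  fixes A :: "'a::field^'n^'n"
  assumes "invertible A"
  shows "A ** matrix_inv A = mat 1"
  using assms invertible_right_inverse matrix_inv_unique by metis

lemma matrix_inv_left:
  fixes A :: "'a::field^'n^'n"
  assumes "invertible A"
  shows "matrix_inv A ** A = mat 1"
  using matrix_inv_right[OF assms] matrix_left_right_inverse by blast

lemma complex_structure_inverse:
  fixes J :: "'a::field^'n^'n"
  assumes "J ** J = - mat 1"
  shows "invertible J" and "matrix_inv J = - J"
proof -
  have "J ** - J = mat 1"
    by (simp add: matrix_mul_rneg assms)
  then show "invertible J" and "matrix_inv J = - J"
    using invertible_right_inverse matrix_inv_unique by blast+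
qed

lemma transpose_isometry_inv:
  fixes A Q :: "'a::field^'n^'n"
  assumes isom: "A ** Q ** transpose A = Q" and "invertible Q"
  shows "invertible A"
    and "transpose A ** matrix_inv Q = matrix_inv Q ** matrix_inv A"
proof -
  have "A ** (Q ** transpose A ** matrix_inv Q) = mat 1"
    using isom matrix_inv_right[OF \<open>invertible Q\<close>] by (simp add: matrix_mul_assoc)
  then have A_inv: "matrix_inv A = Q ** transpose A ** matrix_inv Q"
    by (rule matrix_inv_unique)
  then show "invertible A"
    using \<open>A ** _ = mat 1\<close> invertible_right_inverse by blast
  show "transpose A ** matrix_inv Q = matrix_inv Q ** matrix_inv A"
    unfolding A_inv using matrix_inv_left[OF \<open>invertible Q\<close>]
    by (simp add: matrix_mul_assoc)
qed

lemma inner_matrix_mult_transpose: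
  "(A *v v) \<bullet> ((P :: real^'n^'n) *v w) = v \<bullet> ((transpose A ** P) *v w)"
  by (metis dot_lmul_matrix matrix_vector_mul_assoc vector_transpose_matrix)

lemma inner_matrix_commute: "v \<bullet> ((P :: real^'n^'n) *v w) = w \<bullet> (transpose P *v v)"
  by (metis dot_lmul_matrix inner_commute vector_transpose_matrix)

lemma cform_adjoint:
  assumes "transpose A ** g = g ** B" and "transpose A ** \<omega> = \<omega> ** B"
  shows "cform g \<omega> (A *v v) w = cform g \<omega> v (B *v w)"
  unfolding cform_def inner_matrix_mult_transpose assms
  by (simp add: matrix_vector_mul_assoc)

lemma cform_swap:
  assumes "transpose A ** g = c *\<^sub>R (transpose g ** B)"
    and "transpose A ** \<omega> = c *\<^sub>R (transpose \<omega> ** B)"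
  shows "cform g \<omega> (A *v v) w = of_real c * cform g \<omega> (B *v w) v"
proof -
  have swap: "(A *v v) \<bullet> (P *v w) = c * ((B *v w) \<bullet> (P *v v))"
    if "transpose A ** P = c *\<^sub>R (transpose P ** B)" for P
  proof -
    have "(A *v v) \<bullet> (P *v w) = c * (v \<bullet> (transpose P *v (B *v w)))"
      unfolding inner_matrix_mult_transpose that
      by (simp add: scaleR_matrix_vector_assoc[symmetric] matrix_vector_mul_assoc)
    then show ?thesis
      by (metis inner_matrix_commute transpose_transpose)
  qed
  show ?thesis
    unfolding cform_def swap[OF assms(1)] swap[OF assms(2)] by (simp add: algebra_simps)
qed

lemma complex_structure_cancel:
  fixes J :: "'a::ring_1^'n^'n"
  assumes "J ** J = - mat 1"
  shows "X ** J ** J = - X"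
  by (metis assms matrix_mul_assoc matrix_mul_rneg matrix_mul_rid)

lemma CM_commute:
  fixes J M :: "real^'m^'m"
  assumes "J ** J = - mat 1"
  shows "J ** CM J M = CM J M ** J"
  unfolding CM_def using assms
  by (simp add: complex_structure_cancel[OF assms] matrix_ring_simps algebra_simps)

lemma DM_anticommute:
  fixes J M :: "real^'m^'m"
  assumes "J ** J = - mat 1"
  shows "DM J M ** J = - (J ** DM J M)"
  unfolding DM_def using assms
  by (simp add: complex_structure_cancel[OF assms] matrix_ring_simps algebra_simps)

lemma CM_DM_inverse_anticommute:
  fixes J M N :: "real^'m^'m"
  assumes "J ** J = - mat 1" and "M ** N = mat 1"
  shows "CM J M ** DM J N = - (DM J M ** CM J N)"
proof -
  have "X ** M ** N = X" for X :: "real^'m^'m"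
    by (metis assms(2) matrix_mul_assoc matrix_mul_rid)
  then show ?thesis
    unfolding CM_def DM_def using assms
    by (simp add: complex_structure_cancel[OF assms(1)] matrix_ring_simps algebra_simps)
qed

lemma conjugate_adjoint:
  fixes J M N P :: "real^'m^'m"
  assumes JP: "transpose J ** P = - (P ** J)" and MP: "transpose M ** P = P ** N"
  shows "transpose (J ** M ** J) ** P = P ** (J ** N ** J)"
proof -
  have "transpose (J ** M ** J) ** P = - (transpose J ** (transpose M ** P) ** J)"
    by (simp add: JP matrix_transpose_mul matrix_mul_rneg flip: matrix_mul_assoc)
  also have "\<dots> = P ** (J ** N ** J)"
    by (simp add: MP JP matrix_mul_lneg matrix_mul_assoc)
  finally show ?thesis .
qed

lemma CM_adjoint:
  fixes J M N P :: "real^'m^'m"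
  assumes "transpose J ** P = - (P ** J)" and "transpose M ** P = P ** N"
  shows "transpose (CM J M) ** P = P ** CM J N"
  unfolding CM_def using conjugate_adjoint[OF assms] assms(2)
  by (simp add: transpose_scalar transpose_diff matrix_diff_rdistrib matrix_diff_ldistrib
      matrix_mul_scaleR_right flip: scalar_matrix_assoc)

lemma DM_adjoint:
  fixes J M N P :: "real^'m^'m"
  assumes "transpose J ** P = - (P ** J)" and "transpose M ** P = P ** N"
  shows "transpose (DM J M) ** P = P ** DM J N"
  unfolding DM_def using conjugate_adjoint[OF assms] assms(2)
  by (simp add: transpose_scalar transpose_add matrix_add_rdistrib matrix_add_ldistrib
      matrix_mul_scaleR_right flip: scalar_matrix_assoc)

lemma matrix_inv_commute:
  fixes A B :: "'a::field^'n^'n"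
  assumes "invertible A" and "B ** A = A ** B"
  shows "B ** matrix_inv A = matrix_inv A ** B"
proof -
  have "B ** matrix_inv A = matrix_inv A ** (A ** B) ** matrix_inv A"
    by (simp add: matrix_inv_left[OF assms(1)] matrix_mul_assoc)
  also have "\<dots> = matrix_inv A ** B"
    by (simp add: matrix_inv_right[OF assms(1)] flip: assms(2) matrix_mul_assoc)
  finally show ?thesis .
qed

lemma ZM_anticommute:
  fixes J M :: "real^'m^'m"
  assumes JJ: "J ** J = - mat 1" and "invertible (CM J M)"
  shows "ZM J M ** J = - (J ** ZM J M)"
proof -
  have inv_commute: "J ** matrix_inv (CM J M) = matrix_inv (CM J M) ** J"
    using matrix_inv_commute[OF assms(2) CM_commute[OF JJ]] .
  have "ZM J M ** J = - (matrix_inv (CM J M) ** (J ** DM J M))"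
    unfolding ZM_def by (simp add: DM_anticommute[OF JJ] matrix_mul_rneg flip: matrix_mul_assoc)
  also have "\<dots> = - (J ** ZM J M)"
    unfolding ZM_def by (simp add: inv_commute matrix_mul_assoc)
  finally show ?thesis .
qed

lemma ZM_adjoint:
  fixes J M N P :: "real^'m^'m"
  assumes JJ: "J ** J = - mat 1" and JP: "transpose J ** P = - (P ** J)"
    and MP: "transpose M ** P = P ** N" and MN: "M ** N = mat 1"
    and P: "invertible P" and C: "invertible (CM J M)"
  shows "transpose (ZM J M) ** P = - (P ** ZM J M)"
proof -
  define Ci where "Ci = matrix_inv (CM J M)"
  \<comment> \<open>the inverse of C_(M^-1) = P^-1 C_M^T P\<close>
  define K where "K = matrix_inv P ** transpose Ci ** P"
  have P_cancel: "X ** P ** matrix_inv P = X" for X :: "real^'m^'m"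
    by (metis matrix_inv_right[OF P] matrix_mul_assoc matrix_mul_rid)
  have Ci_C: "Ci ** CM J M = mat 1"
    unfolding Ci_def by (rule matrix_inv_left[OF C])
  have "CM J N = matrix_inv P ** (transpose (CM J M) ** P)"
    by (simp add: CM_adjoint[OF JP MP] matrix_inv_left[OF P] matrix_mul_assoc)
  then have "CM J N ** K = matrix_inv P ** transpose (Ci ** CM J M) ** P"
    unfolding K_def by (simp add: P_cancel matrix_transpose_mul matrix_mul_assoc)
  then have CK: "CM J N ** K = mat 1"
    by (simp add: Ci_C matrix_inv_left[OF P])
  have "DM J N = Ci ** (CM J M ** DM J N)"
    by (simp add: Ci_C matrix_mul_assoc)
  then have "DM J N ** K = - (Ci ** DM J M ** (CM J N ** K))"
    by (simp add: CM_DM_inverse_anticommute[OF JJ MN] matrix_mul_rneg matrix_mul_lneg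
        matrix_mul_assoc)
  then have DK: "DM J N ** K = - ZM J M"
    by (simp add: CK ZM_def Ci_def)
  have "transpose (ZM J M) ** P = transpose (DM J M) ** P ** K"
    unfolding ZM_def K_def Ci_def
    by (simp add: matrix_transpose_mul P_cancel matrix_mul_assoc)
  also have "\<dots> = - (P ** ZM J M)"
    by (simp add: DM_adjoint[OF JP MP] DK matrix_mul_rneg flip: matrix_mul_assoc)
  finally show ?thesis .
qed

lemma CM_J_adjoint:
  fixes J M N P :: "real^'m^'m"
  assumes "J ** J = - mat 1" and "transpose J ** P = - (P ** J)"
    and "transpose M ** P = P ** N"
  shows "transpose (CM J M) ** (P ** J) = P ** J ** CM J N"
proof -
  have "transpose (CM J M) ** (P ** J) = P ** (CM J N ** J)"
    by (simp add: CM_adjoint[OF assms(2,3)] matrix_mul_assoc)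
  then show ?thesis
    by (metis CM_commute[OF assms(1)] matrix_mul_assoc)
qed

lemma DM_J_adjoint:
  fixes J M N P :: "real^'m^'m"
  assumes "J ** J = - mat 1" and "transpose J ** P = - (P ** J)"
    and "transpose M ** P = P ** N"
  shows "transpose (DM J M) ** (P ** J) = - (P ** J ** DM J N)"
proof -
  have "transpose (DM J M) ** (P ** J) = P ** (DM J N ** J)"
    by (simp add: DM_adjoint[OF assms(2,3)] matrix_mul_assoc)
  then show ?thesis
    by (simp add: DM_anticommute[OF assms(1)] matrix_mul_rneg matrix_mul_assoc)
qed

lemma ZM_J_adjoint:
  fixes J M N P :: "real^'m^'m"
  assumes "J ** J = - mat 1" and "transpose J ** P = - (P ** J)"
    and "transpose M ** P = P ** N" and "M ** N = mat 1"
    and "invertible P" and "invertible (CM J M)"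
  shows "transpose (ZM J M) ** (P ** J) = P ** J ** ZM J M"
proof -
  have "transpose (ZM J M) ** (P ** J) = - (P ** (ZM J M ** J))"
    by (simp add: ZM_adjoint[OF assms] matrix_mul_lneg matrix_mul_assoc)
  then show ?thesis
    by (simp add: ZM_anticommute[OF assms(1,6)] matrix_mul_rneg matrix_mul_assoc)
qed

lemma sympOmega_square: "(sympOmega :: real^('n::finite + 'n)^('n + 'n)) ** sympOmega = - mat 1"
proof -
  have sum_Plus: "sum f UNIV = sum (f \<circ> Inl) UNIV + sum (f \<circ> Inr) UNIV"
    for f :: "'n + 'n \<Rightarrow> real"
    using sum.Plus[of "UNIV :: 'n set" "UNIV :: 'n set" f] by simp
  have "(sympOmega ** sympOmega) $ i $ j = (- mat 1 :: real^('n + 'n)^('n + 'n)) $ i $ j" for i j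
    by (cases i; cases j) (simp_all add: matrix_matrix_mult_def sympOmega_def mat_def sum_Plus
        if_distrib if_distribR sum.delta cong: if_cong)
  then show ?thesis
    by (simp add: vec_eq_iff)
qed

lemma transpose_sympOmega: "transpose (sympOmega :: real^('n::finite + 'n)^('n + 'n)) = - sympOmega"
  by (auto simp: vec_eq_iff sympOmega_def transpose_def split: sum.splits)

lemma bos_form_eq:
  fixes J :: "real^('n::finite + 'n)^('n + 'n)"
  assumes "J ** J = - mat 1"
  shows "bos_form J = cform (- sympOmega ** J) (- sympOmega)"
proof -
  have "matrix_inv (- (J ** sympOmega)) = - sympOmega ** J"
    by (rule matrix_inv_unique)
      (simp add: assms complex_structure_cancel[OF sympOmega_square] matrix_mul_lneg
        matrix_mul_rneg matrix_mul_assoc)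
  then show ?thesis
    unfolding bos_form_def complex_structure_inverse(2)[OF sympOmega_square] by simp
qed

lemma bos_form_identities:
  fixes J M :: "real^('n::finite + 'n)^('n + 'n)"
  assumes JJ: "J ** J = - mat 1" and J_symp: "J ** sympOmega ** transpose J = sympOmega"
    and M_symp: "M ** sympOmega ** transpose M = sympOmega"
  shows "bos_form J (CM J M *v v) w = bos_form J v (CM J (matrix_inv M) *v w)"
    and "bos_form J (DM J M *v v) w = - bos_form J (DM J (matrix_inv M) *v w) v"
    and "invertible (CM J M) \<Longrightarrow> bos_form J (ZM J M *v v) w = bos_form J (ZM J M *v w) v"
proof -
  define W where "W = - (sympOmega :: real^('n + 'n)^('n + 'n))"
  define N where "N = matrix_inv M"
  have W_inv: "matrix_inv sympOmega = W" and WW: "W ** W = - mat 1" and WT: "transpose W = - W"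
    unfolding W_def
    by (simp_all add: complex_structure_inverse sympOmega_square transpose_sympOmega
        transpose_uminus matrix_mul_lneg matrix_mul_rneg)
  have "invertible (sympOmega :: real^('n + 'n)^('n + 'n))"
    by (rule complex_structure_inverse(1)[OF sympOmega_square])
  note symp = transpose_isometry_inv[OF _ this, unfolded W_inv]
  have JW: "transpose J ** W = - (W ** J)"
    using symp(2)[OF J_symp] by (simp add: complex_structure_inverse(2)[OF JJ] matrix_mul_rneg)
  have MW: "transpose M ** W = W ** N" and MN: "M ** N = mat 1"
    using symp[OF M_symp] by (simp_all add: N_def matrix_inv_right)
  have form: "bos_form J = cform (W ** J) W"
    unfolding W_def by (rule bos_form_eq[OF JJ])
  have gT: "transpose (W ** J) = W ** J"
    by (simp add: matrix_transpose_mul WT JW matrix_mul_rneg)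
  show "bos_form J (CM J M *v v) w = bos_form J v (CM J (matrix_inv M) *v w)"
    unfolding form N_def[symmetric]
    by (rule cform_adjoint[OF CM_J_adjoint[OF JJ JW MW] CM_adjoint[OF JW MW]])
  show "bos_form J (DM J M *v v) w = - bos_form J (DM J (matrix_inv M) *v w) v"
    unfolding form N_def[symmetric]
    by (rule cform_swap[where c = "-1", simplified])
      (simp_all add: DM_J_adjoint[OF JJ JW MW] DM_adjoint[OF JW MW] gT WT matrix_mul_lneg)
  assume C_inv: "invertible (CM J M)"
  note W_invertible = complex_structure_inverse(1)[OF WW]
  show "bos_form J (ZM J M *v v) w = bos_form J (ZM J M *v w) v"
    unfolding form
    by (rule cform_swap[where c = 1, simplified])
      (simp_all add: ZM_J_adjoint[OF JJ JW MW MN W_invertible C_inv]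
        ZM_adjoint[OF JJ JW MW MN W_invertible C_inv]
        gT WT matrix_mul_lneg)
qed

lemma ferm_form_identities:
  fixes J M :: "real^('n::finite + 'n)^('n + 'n)"
  assumes JJ: "J ** J = - mat 1" and J_orth: "J ** transpose J = mat 1"
    and M_orth: "M ** transpose M = mat 1"
  shows "ferm_form J (CM J M *v v) w = ferm_form J v (CM J (matrix_inv M) *v w)"
    and "ferm_form J (DM J M *v v) w = ferm_form J (DM J (matrix_inv M) *v w) v"
    and "invertible (CM J M) \<Longrightarrow> ferm_form J (ZM J M *v v) w = - ferm_form J (ZM J M *v w) v"
proof -
  define N where "N = matrix_inv M"
  have JT: "transpose J = - J"
    using matrix_inv_unique[OF J_orth] complex_structure_inverse(2)[OF JJ] by simp
  have MT: "transpose M = N" and MN: "M ** N = mat 1"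
    using matrix_inv_unique[OF M_orth] M_orth by (simp_all add: N_def)
  have J1: "transpose J ** mat 1 = - (mat 1 ** J)" and M1: "transpose M ** mat 1 = mat 1 ** N"
    by (simp_all add: JT MT)
  have form: "ferm_form J = cform (mat 1) (- J)"
    unfolding ferm_form_def
    by (simp add: complex_structure_inverse(2)[OF JJ] matrix_inv_unique[of "mat 1" "mat 1"])
  have C: "transpose (CM J M) = CM J N" and D: "transpose (DM J M) = DM J N"
    using CM_adjoint[OF J1 M1] DM_adjoint[OF J1 M1] by simp_all
  show "ferm_form J (CM J M *v v) w = ferm_form J v (CM J (matrix_inv M) *v w)"
    unfolding form N_def[symmetric]
    by (rule cform_adjoint) (simp_all add: C CM_commute[OF JJ] matrix_mul_lneg matrix_mul_rneg)
  show "ferm_form J (DM J M *v v) w = ferm_form J (DM J (matrix_inv M) *v w) v"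
    unfolding form N_def[symmetric]
    by (rule cform_swap[where c = 1, simplified])
      (simp_all add: D DM_anticommute[OF JJ] JT transpose_uminus matrix_mul_lneg matrix_mul_rneg)
  assume C_inv: "invertible (CM J M)"
  have "invertible (mat 1 :: real^('n + 'n)^('n + 'n))"
    unfolding invertible_def by auto
  then have Z: "transpose (ZM J M) = - ZM J M"
    using ZM_adjoint[OF JJ J1 M1 MN _ C_inv] by simp
  show "ferm_form J (ZM J M *v v) w = - ferm_form J (ZM J M *v w) v"
    unfolding form
    by (rule cform_swap[where c = "-1", simplified])
      (simp_all add: Z ZM_anticommute[OF JJ C_inv] JT transpose_uminus matrix_mul_lneg
        matrix_mul_rneg)
qed

theorem lemma3:
  shows
  "(\<forall>(J :: real^('n::finite + 'n)^('n + 'n)) (M :: real^('n + 'n)^('n + 'n)).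
      J ** J = - mat 1 \<and>
      J ** sympOmega ** transpose J = sympOmega \<and>
      (\<forall>x. x \<noteq> 0 \<longrightarrow> x \<bullet> ((- (J ** sympOmega)) *v x) > 0) \<and>
      M ** sympOmega ** transpose M = sympOmega
    \<longrightarrow>
      (\<forall>v w. bos_form J (CM J M *v v) w = bos_form J v (CM J (matrix_inv M) *v w)) \<and>
      (\<forall>v w. bos_form J (DM J M *v v) w = - bos_form J (DM J (matrix_inv M) *v w) v) \<and>
      (invertible (CM J M) \<longrightarrow>
        (\<forall>v w. bos_form J (ZM J M *v v) w = bos_form J (ZM J M *v w) v)))
   \<and>
   (\<forall>(J :: real^('n::finite + 'n)^('n + 'n)) (M :: real^('n + 'n)^('n + 'n)).
      J ** J = - mat 1 \<and>
      J ** transpose J = mat 1 \<and>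
      M ** transpose M = mat 1 \<and> det M = 1
    \<longrightarrow>
      (\<forall>v w. ferm_form J (CM J M *v v) w = ferm_form J v (CM J (matrix_inv M) *v w)) \<and>
      (\<forall>v w. ferm_form J (DM J M *v v) w = ferm_form J (DM J (matrix_inv M) *v w) v) \<and>
      (invertible (CM J M) \<longrightarrow>
        (\<forall>v w. ferm_form J (ZM J M *v v) w = - ferm_form J (ZM J M *v w) v)))"
proof (intro conjI allI impI; elim conjE)
  fix J M :: "real^('n + 'n)^('n + 'n)" and v w
  assume "J ** J = - mat 1" "J ** sympOmega ** transpose J = sympOmega"
    "M ** sympOmega ** transpose M = sympOmega"
  note bos = bos_form_identities[OF this]
  show "bos_form J (CM J M *v v) w = bos_form J v (CM J (matrix_inv M) *v w)"
    by (rule bos(1))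
  show "bos_form J (DM J M *v v) w = - bos_form J (DM J (matrix_inv M) *v w) v"
    by (rule bos(2))
  show "bos_form J (ZM J M *v v) w = bos_form J (ZM J M *v w) v" if "invertible (CM J M)"
    by (rule bos(3)[OF that])
next
  fix J M :: "real^('n + 'n)^('n + 'n)" and v w
  assume "J ** J = - mat 1" "J ** transpose J = mat 1" "M ** transpose M = mat 1"
  note ferm = ferm_form_identities[OF this]
  show "ferm_form J (CM J M *v v) w = ferm_form J v (CM J (matrix_inv M) *v w)"
    by (rule ferm(1))
  show "ferm_form J (DM J M *v v) w = ferm_form J (DM J (matrix_inv M) *v w) v"
    by (rule ferm(2))
  show "ferm_form J (ZM J M *v v) w = - ferm_form J (ZM J M *v w) v" if "invertible (CM J M)"
    by (rule ferm(3)[OF that])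
qed

end
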